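(* Let $p$ be a prime, $m$ a positive integer, $q=p^m$, $n=q^2+1$. Let $\lambda\in\mathbb{F}_{q^2}^*$ have multiplicative order $r$, where $r\mid (q-1)$ and $\nu_2(r)=\nu_2(q-1)$. Let $\delta\in\mathbb{F}_{q^4}$ be a primitive $rn$-th root of unity with $\delta^n=\lambda$. For a positive integer $s$ with $s\mid(q^2-1)$, let $U_{s(q^2+1)}$ denote the set of all $s(q^2+1)$-th roots of unity in $\mathbb{F}_{q^4}^*$. Define $h(x)=x^{q-1}$ for $x\in U_{r(q^2+1)}$, and $h^{-1}(y_0)=\{x\in U_{r(q^2+1)}: h(x)=y_0\}$. Let $T=\{\delta^{-i}:0\le i\le q^2\}$ and $\lambda^jT=\{\lambda^j\delta^{-i}:0\le i\le q^2\}$ for $0\le j\le r-1$. Then $h$ maps $U_{r(q^2+1)}$ onto $U_{q^2+1}$. Moreover, for $y_0\in U_{q^2+1}$, if $h(x_0)=y_0$ for some $x_0\in U_{r(q^2+1)}$, then $h^{-1}(y_0)=\{\lambda^jx_0: 0\le j\le r-1\}$ and $|h^{-1}(y_0)\cap\lambda^jT|=1$ for every $0\le j\le r-1$.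
   Context: $\nu_2(\cdot)$ denotes the $2$-adic valuation of a positive integer. *)

theory Defs
  imports "HOL-Computational_Algebra.Computational_Algebra"
begin

definition mult_order :: "'a::field \<Rightarrow> nat" where
  "mult_order x = (if \<exists>k>0. x ^ k = 1 then (LEAST k. k > 0 \<and> x ^ k = 1) else 0)"

definition roots_of_unity :: "nat \<Rightarrow> 'a::field set" where
  "roots_of_unity k = {x. x \<noteq> 0 \<and> x ^ k = 1}"

definition nu2 :: "nat \<Rightarrow> nat" where
  "nu2 r = multiplicity (2::nat) r"

end

theory Submission
  imports Defs "HOL-Number_Theory.Cong"
begin

text \<open>
  Write N = r n and q - 1 = r t. Equality of the 2-adic valuations makes t odd, and since
  q^2 + 1 = (q - 1)(q + 1) + 2 this forces gcd(N, q - 1) = r. In the cyclic group U_N generated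
  by \<delta>, the map x \<mapsto> x^(q-1) therefore has image U_(N/r) = U_n, and its fibre through x0 is the
  coset x0 U_r = {\<lambda>^j x0}. Such a coset meets z T = {z \<delta>^(-i) : i < n} exactly once for every
  z in U_N, because z \<delta>^(-i) lies in x0 U_r iff (\<delta>^r)^i = (z/x0)^r, and \<delta>^r has order n.
\<close>

lemma power_eq_one_iff_mult_order_dvd:
  fixes x :: "'a::field"
  shows "x ^ k = 1 \<longleftrightarrow> mult_order x dvd k"
proof (cases "\<exists>k>0. x ^ k = 1")
  case True
  define d where "d = mult_order x"
  have d: "d = (LEAST k. k > 0 \<and> x ^ k = 1)"
    using True by (simp add: d_def mult_order_def)
  have "d > 0" and xd: "x ^ d = 1"
    using LeastI_ex[OF True] by (simp_all add: d)
  show ?thesis unfolding d_def[symmetric]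
  proof
    assume xk: "x ^ k = 1"
    have "x ^ k = (x ^ d) ^ (k div d) * x ^ (k mod d)"
      by (metis div_mult_mod_eq power_add power_mult mult.commute)
    with xk xd have "x ^ (k mod d) = 1" by simp
    moreover have "k mod d < d" using \<open>d > 0\<close> by simp
    ultimately have "k mod d = 0" using not_less_Least d by blast
    then show "d dvd k" by auto
  qed (auto simp: xd power_mult)
next
  case False
  then have "mult_order x = 0" unfolding mult_order_def by (rule if_not_P)
  with False show ?thesis by auto
qed

lemma power_eq_power_iff_cong_mult_order:
  fixes x :: "'a::field"
  assumes "x \<noteq> 0"
  shows "x ^ i = x ^ j \<longleftrightarrow> [i = j] (mod mult_order x)"
proof -
  have "x ^ i = x ^ j \<longleftrightarrow> [i = j] (mod mult_order x)" if "i \<le> j" for i j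
  proof -
    have "x ^ j = x ^ i * x ^ (j - i)" using that by (simp flip: power_add)
    then have "x ^ i = x ^ j \<longleftrightarrow> x ^ (j - i) = 1" using assms by auto
    then show ?thesis
      using that by (simp add: power_eq_one_iff_mult_order_dvd cong_altdef_nat[of i j] cong_sym_eq[of i j])
  qed
  then show ?thesis by (metis cong_sym_eq nat_le_linear)
qed

lemma mult_order_zero [simp]: "mult_order (0::'a::field) = 0"
  by (simp add: mult_order_def power_0_left)

lemma mult_order_eqI:
  fixes x :: "'a::field"
  assumes "\<And>k. x ^ k = 1 \<longleftrightarrow> d dvd k"
  shows "mult_order x = d"
  using assms by (metis dvd_antisym dvd_refl power_eq_one_iff_mult_order_dvd)

lemma mult_order_power:
  fixes x :: "'a::field"
  assumes "mult_order x = r * n" "r > 0"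
  shows "mult_order (x ^ r) = n"
  by (rule mult_order_eqI) (use assms in \<open>simp add: power_eq_one_iff_mult_order_dvd flip: power_mult\<close>)

lemma power_gcd_eq_one:
  fixes x :: "'a::field"
  assumes "x ^ a = 1" "x ^ b = 1"
  shows "x ^ gcd a b = 1"
  using assms by (simp add: power_eq_one_iff_mult_order_dvd)

lemma mem_roots_of_unity_iff: "k > 0 \<Longrightarrow> x \<in> roots_of_unity k \<longleftrightarrow> x ^ k = 1"
  by (auto simp: roots_of_unity_def power_0_left)

lemma card_roots_of_unity_le:
  assumes "k > 0"
  shows "finite (roots_of_unity k :: 'a::field set)" "card (roots_of_unity k :: 'a set) \<le> k"
proof -
  define P :: "'a poly" where "P = monom 1 k - 1"
  have roots: "roots_of_unity k = {x. poly P x = 0}"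
    using assms by (auto simp: P_def poly_monom mem_roots_of_unity_iff)
  have "poly P 0 \<noteq> 0" using assms by (simp add: P_def poly_monom power_0_left)
  then have "P \<noteq> 0" by auto
  moreover have "degree P \<le> k"
    unfolding P_def by (rule degree_diff_le) (auto simp: degree_monom_le)
  ultimately show "finite (roots_of_unity k :: 'a set)" "card (roots_of_unity k :: 'a set) \<le> k"
    unfolding roots using poly_roots_finite card_poly_roots_bound le_trans by blast+
qed

lemma roots_of_unity_eq_powers:
  fixes z :: "'a::field"
  assumes "mult_order z = k" "k > 0"
  shows "roots_of_unity k = (\<lambda>i. z ^ i) ` {..<k}"
proof -
  have "z ^ k = 1" using assms by (simp add: power_eq_one_iff_mult_order_dvd)
  then have "z \<noteq> 0" using assms(2) by (auto simp: power_0_left)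
  have sub: "(\<lambda>i. z ^ i) ` {..<k} \<subseteq> roots_of_unity k"
    using \<open>z ^ k = 1\<close> assms(2)
    by (auto simp: mem_roots_of_unity_iff) (metis power_mult mult.commute power_one)
  have "inj_on (\<lambda>i. z ^ i) {..<k}"
    using \<open>z \<noteq> 0\<close> assms
    by (auto simp: inj_on_def power_eq_power_iff_cong_mult_order cong_less_modulus_unique_nat)
  then have "card ((\<lambda>i. z ^ i) ` {..<k}) = k" by (simp add: card_image)
  then show ?thesis
    using card_subset_eq[OF _ sub] card_roots_of_unity_le[OF assms(2)] sub card_mono
    by (metis le_antisym)
qed

lemma power_image_roots_of_unity:
  fixes \<delta> :: "'a::field"
  assumes "mult_order \<delta> = N" "N > 0"
  shows "(\<lambda>x. x ^ k) ` roots_of_unity N = (roots_of_unity (N div gcd N k) :: 'a set)"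
proof
  define g where "g = gcd N k"
  have "g > 0" "g dvd N" "g dvd k" using assms(2) by (simp_all add: g_def)
  then have N: "N = g * (N div g)" by simp
  then have "N div g > 0" using assms(2) by (metis mult_0_right neq0_conv)
  show "(\<lambda>x. x ^ k) ` roots_of_unity N \<subseteq> (roots_of_unity (N div gcd N k) :: 'a set)"
  proof (rule image_subsetI)
    fix x :: 'a assume "x \<in> roots_of_unity N"
    then have "x ^ N = 1" using assms(2) by (simp add: mem_roots_of_unity_iff)
    have "(x ^ k) ^ (N div g) = (x ^ N) ^ (k div g)"
      using \<open>g dvd N\<close> \<open>g dvd k\<close> by (simp flip: power_mult) (metis div_mult_swap mult.commute)
    then show "x ^ k \<in> roots_of_unity (N div gcd N k)"
      using \<open>x ^ N = 1\<close> \<open>N div g > 0\<close> by (simp add: mem_roots_of_unity_iff g_def)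
  qed
  show "roots_of_unity (N div gcd N k) \<subseteq> (\<lambda>x. x ^ k) ` (roots_of_unity N :: 'a set)"
  proof
    fix y :: 'a assume y: "y \<in> roots_of_unity (N div gcd N k)"
    then have "y ^ (N div g) = 1" using \<open>N div g > 0\<close> by (simp add: mem_roots_of_unity_iff g_def)
    then have "y ^ N = 1"
      by (metis N dvd_triv_right dvd_trans power_eq_one_iff_mult_order_dvd)
    then have "y \<in> roots_of_unity N" using assms(2) by (simp add: mem_roots_of_unity_iff)
    then obtain i where i: "y = \<delta> ^ i" using roots_of_unity_eq_powers[OF assms] by auto
    have "\<delta> ^ (i * (N div g)) = 1"
      using \<open>y ^ (N div g) = 1\<close> by (simp add: i power_mult)
    then have "(N div g) * g dvd (N div g) * i"
      using assms(1) by (simp add: power_eq_one_iff_mult_order_dvd mult.commute flip: N)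
    then have "g dvd i" using \<open>N div g > 0\<close> by (rule dvd_mult_cancel)
    then have "gcd k N dvd i" by (simp add: g_def gcd.commute)
    then obtain u where "[k * u = i] (mod N)" by (blast dest: cong_solve_dvd_nat)
    have "\<delta> \<noteq> 0" using assms by (metis mult_order_zero neq0_conv)
    have "(\<delta> ^ u) ^ k = \<delta> ^ (k * u)" by (metis power_mult mult.commute)
    also have "\<dots> = y"
      using \<open>[k * u = i] (mod N)\<close> \<open>\<delta> \<noteq> 0\<close> assms(1) i by (simp add: power_eq_power_iff_cong_mult_order)
    finally have "(\<delta> ^ u) ^ k = y" .
    moreover have "\<delta> ^ u \<in> roots_of_unity N"
      using assms by (simp add: mem_roots_of_unity_iff power_eq_one_iff_mult_order_dvd flip: power_mult)
    ultimately show "y \<in> (\<lambda>x. x ^ k) ` roots_of_unity N" by blast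
  qed
qed

lemma power_fibre_roots_of_unity:
  fixes x0 :: "'a::field"
  assumes "x0 \<in> roots_of_unity N"
  shows "{x \<in> roots_of_unity N. x ^ k = x0 ^ k} = (\<lambda>w. w * x0) ` roots_of_unity (gcd N k)"
proof
  have "x0 \<noteq> 0" "x0 ^ N = 1" using assms by (simp_all add: roots_of_unity_def)
  show "{x \<in> roots_of_unity N. x ^ k = x0 ^ k} \<subseteq> (\<lambda>w. w * x0) ` roots_of_unity (gcd N k)"
  proof clarify
    fix x :: 'a assume "x \<in> roots_of_unity N" "x ^ k = x0 ^ k"
    then have "x \<noteq> 0" "(x / x0) ^ N = 1" "(x / x0) ^ k = 1"
      using \<open>x0 \<noteq> 0\<close> \<open>x0 ^ N = 1\<close> by (simp_all add: roots_of_unity_def power_divide)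
    then have "x / x0 \<in> roots_of_unity (gcd N k)"
      using \<open>x0 \<noteq> 0\<close> by (simp add: roots_of_unity_def power_gcd_eq_one)
    moreover have "x = x / x0 * x0" using \<open>x0 \<noteq> 0\<close> by simp
    ultimately show "x \<in> (\<lambda>w. w * x0) ` roots_of_unity (gcd N k)" by blast
  qed
  show "(\<lambda>w. w * x0) ` roots_of_unity (gcd N k) \<subseteq> {x \<in> roots_of_unity N. x ^ k = x0 ^ k}"
  proof (rule image_subsetI, rule CollectI, rule conjI)
    fix w :: 'a assume "w \<in> roots_of_unity (gcd N k)"
    then have "w \<noteq> 0" "w ^ N = 1" "w ^ k = 1"
      by (auto simp: roots_of_unity_def power_eq_one_iff_mult_order_dvd)
    then show "w * x0 \<in> roots_of_unity N" "(w * x0) ^ k = x0 ^ k"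
      using \<open>x0 \<noteq> 0\<close> \<open>x0 ^ N = 1\<close> by (simp_all add: roots_of_unity_def power_mult_distrib)
  qed
qed

lemma card_coset_inter_inverse_powers:
  fixes \<delta> x0 z :: "'a::field"
  assumes "mult_order \<delta> = r * n" "r > 0" "n > 0"
    and "x0 \<in> roots_of_unity (r * n)" "z \<in> roots_of_unity (r * n)"
  shows "card ((\<lambda>w. w * x0) ` roots_of_unity r \<inter> {z * inverse \<delta> ^ i | i. i < n}) = 1"
proof -
  have "\<delta> \<noteq> 0" using assms(1-3) by (metis mult_order_zero mult_is_0 neq0_conv)
  have "x0 \<noteq> 0" "z \<noteq> 0" "x0 ^ (r * n) = 1" "z ^ (r * n) = 1"
    using assms(4,5) by (simp_all add: roots_of_unity_def)
  have ord: "mult_order (\<delta> ^ r) = n" using assms(1,2) by (rule mult_order_power)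
  define y where "y = (z / x0) ^ r"
  have "y \<in> roots_of_unity n"
    using \<open>x0 \<noteq> 0\<close> \<open>z \<noteq> 0\<close> \<open>x0 ^ (r * n) = 1\<close> \<open>z ^ (r * n) = 1\<close>
    by (simp add: roots_of_unity_def y_def power_divide flip: power_mult)
  then obtain i0 where i0: "i0 < n" "(\<delta> ^ r) ^ i0 = y"
    using roots_of_unity_eq_powers[OF ord assms(3)] by auto
  have uniq: "i = i0" if "i < n" "(\<delta> ^ r) ^ i = y" for i
    using that i0 ord \<open>\<delta> \<noteq> 0\<close>
    by (metis power_eq_power_iff_cong_mult_order cong_less_modulus_unique_nat power_not_zero)
  have mem: "z * inverse \<delta> ^ i \<in> (\<lambda>w. w * x0) ` roots_of_unity r \<longleftrightarrow> (\<delta> ^ r) ^ i = y" for i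
  proof -
    have "z * inverse \<delta> ^ i \<in> (\<lambda>w. w * x0) ` roots_of_unity r
        \<longleftrightarrow> z * inverse \<delta> ^ i / x0 \<in> roots_of_unity r"
      using \<open>x0 \<noteq> 0\<close> by (auto simp: image_iff) (metis nonzero_eq_divide_eq)
    also have "\<dots> \<longleftrightarrow> y / (\<delta> ^ i) ^ r = 1"
      using assms(2) by (simp add: mem_roots_of_unity_iff y_def power_divide power_mult_distrib
          power_inverse divide_inverse ac_simps)
    also have "\<dots> \<longleftrightarrow> (\<delta> ^ r) ^ i = y"
      using \<open>\<delta> \<noteq> 0\<close> by (auto simp: mult.commute simp flip: power_mult)
    finally show ?thesis .
  qed
  have "(\<lambda>w. w * x0) ` roots_of_unity r \<inter> {z * inverse \<delta> ^ i | i. i < n} = {z * inverse \<delta> ^ i0}"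
  proof (intro equalityI subsetI)
    fix v assume "v \<in> (\<lambda>w. w * x0) ` roots_of_unity r \<inter> {z * inverse \<delta> ^ i | i. i < n}"
    then obtain i where "i < n" "v = z * inverse \<delta> ^ i" "v \<in> (\<lambda>w. w * x0) ` roots_of_unity r"
      by blast
    then show "v \<in> {z * inverse \<delta> ^ i0}" using mem uniq by simp
  qed (use i0 mem in blast)
  then show ?thesis by simp
qed

lemma odd_quotient_of_nu2_eq:
  assumes "r dvd a" "a > 0" "nu2 r = nu2 a"
  shows "odd (a div r)"
proof -
  obtain t where a: "a = r * t" using assms(1) by blast
  then have "r > 0" "t > 0" using assms(2) by simp_all
  then have "multiplicity 2 a = multiplicity 2 r + multiplicity (2::nat) t"
    unfolding a by (simp add: prime_elem_multiplicity_mult_distrib)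
  then have "multiplicity (2::nat) t = 0" using assms(3) by (simp add: nu2_def)
  then have "odd t" using \<open>t > 0\<close> by (simp add: not_dvd_imp_multiplicity_0 multiplicity_eq_zero_iff)
  then show ?thesis using \<open>r > 0\<close> by (simp add: a)
qed

lemma coprime_square_plus_one_if_odd_dvd_pred:
  fixes q t :: nat
  assumes "odd t" "t dvd q - 1"
  shows "coprime t (q\<^sup>2 + 1)"
proof (cases "q = 0")
  case False
  then have "[q = 1] (mod t)" using assms(2) by (simp add: cong_altdef_nat)
  then have "[q\<^sup>2 + 1 = 2] (mod t)"
    using cong_add[OF cong_pow[of q 1 t 2] cong_refl[of 1]] by (simp add: numeral_2_eq_2)
  then have "gcd (q\<^sup>2 + 1) t = gcd 2 t" by (rule cong_gcd_eq)
  then show ?thesis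
    using assms(1) coprime_right_2_iff_odd[of t] by (simp add: coprime_iff_gcd_eq_1 gcd.commute)
qed simp

theorem lemma3p3:
  fixes p m q n r :: nat and lam \<delta> :: "'a::{field,finite}"
  assumes "prime p" and "m > 0" and "q = p ^ m" and "n = q\<^sup>2 + 1"
    and "card (UNIV :: 'a set) = q ^ 4"
    and "lam ^ (q\<^sup>2) = lam" and "lam \<noteq> 0"
    and "mult_order lam = r" and "r dvd (q - 1)" and "nu2 r = nu2 (q - 1)"
    and "mult_order \<delta> = r * n" and "\<delta> ^ n = lam"
  shows "(\<lambda>x::'a. x ^ (q - 1)) ` roots_of_unity (r * n) = (roots_of_unity n :: 'a set)
    \<and> (\<forall>y0 \<in> roots_of_unity n. \<forall>x0 \<in> roots_of_unity (r * n). x0 ^ (q - 1) = y0 \<longrightarrow>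
          {x \<in> roots_of_unity (r * n). x ^ (q - 1) = y0} = {lam ^ j * x0 | j. j < r}
          \<and> (\<forall>j < r. card ({x \<in> roots_of_unity (r * n). x ^ (q - 1) = y0}
                 \<inter> {lam ^ j * inverse \<delta> ^ i | i. i \<le> q\<^sup>2}) = 1))"
proof -
  have "q > 1" using assms(1-3) by (metis one_less_power prime_gt_1_nat)
  then have "r > 0" "n > 0" using assms(4,9) by (auto intro: Nat.gr0I)
  obtain t where t: "q - 1 = r * t" using assms(9) ..
  have "odd t" using odd_quotient_of_nu2_eq[OF assms(9) _ assms(10)] t \<open>q > 1\<close> \<open>r > 0\<close> by simp
  then have "coprime t n"
    using coprime_square_plus_one_if_odd_dvd_pred[of t q] t assms(4) by simp
  then have gcd: "gcd (r * n) (q - 1) = r"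
    unfolding t by (simp add: gcd_mult_distrib_nat[symmetric] coprime_iff_gcd_eq_1 gcd.commute)
  have U_r: "roots_of_unity r = (\<lambda>j. lam ^ j) ` {..<r}"
    using assms(8) \<open>r > 0\<close> by (rule roots_of_unity_eq_powers)
  have "(\<lambda>x::'a. x ^ (q - 1)) ` roots_of_unity (r * n) = roots_of_unity n"
    using power_image_roots_of_unity[OF assms(11)] gcd \<open>r > 0\<close> \<open>n > 0\<close> by simp
  moreover have "{x \<in> roots_of_unity (r * n). x ^ (q - 1) = y0} = {lam ^ j * x0 | j. j < r}
      \<and> (\<forall>j < r. card ({x \<in> roots_of_unity (r * n). x ^ (q - 1) = y0}
             \<inter> {lam ^ j * inverse \<delta> ^ i | i. i \<le> q\<^sup>2}) = 1)"
    if x0: "x0 \<in> roots_of_unity (r * n)" "x0 ^ (q - 1) = y0" for x0 y0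
  proof -
    have fibre: "{x \<in> roots_of_unity (r * n). x ^ (q - 1) = y0} = (\<lambda>w. w * x0) ` roots_of_unity r"
      using power_fibre_roots_of_unity[OF x0(1), of "q - 1"] x0(2) gcd by simp
    have "lam ^ j \<in> roots_of_unity (r * n)" for j
      using assms(7,8) \<open>r > 0\<close> \<open>n > 0\<close>
      by (simp add: mem_roots_of_unity_iff power_eq_one_iff_mult_order_dvd flip: power_mult)
    moreover have "{lam ^ j * inverse \<delta> ^ i | i. i \<le> q\<^sup>2} = {lam ^ j * inverse \<delta> ^ i | i. i < n}" for j
      using assms(4) by (simp add: less_Suc_eq_le)
    ultimately show ?thesis
      using fibre U_r card_coset_inter_inverse_powers[OF assms(11) \<open>r > 0\<close> \<open>n > 0\<close> x0(1)]
      by (auto simp: image_image)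
  qed
  ultimately show ?thesis by blast
qed

end
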